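(* Let $L$ be a finite semidistributive extremal lattice with $|L|>1$. Then the order dimension of $L$ equals the chromatic number of the complement $\overline{G(L)}$ of its Galois graph.
   Context: A lattice is semidistributive if $x\vee y=x\vee z$ implies $x\vee(y\wedge z)=x\vee y$ and $x\wedge y=x\wedge z$ implies $x\wedge(y\vee z)=x\wedge y$. $L$ is extremal if its length $n$ (maximum number of elements of a chain minus one) equals both the number of join-irreducible elements and the number of meet-irreducible elements. For extremal $L$, choosing a chain $\hat0=x_0\lessdot\dots\lessdot x_n=\hat1$ of length $n$ gives numberings $j_1,\dots,j_n$ of the join-irreducibles and $m_1,\dots,m_n$ of the meet-irreducibles with $x_i=j_1\vee\dots\vee j_i=m_{i+1}\wedge\dots\wedge m_n$. The Galois graph $G(L)$ is the directed graph on the join-irreducibles with an edge $j_i\to j_k$ whenever $i\ne k$ and $j_i\not\le m_k$. Its complement $\overline{G(L)}$ is the simple undirected graph on the same vertices with an edge between two vertices iff there is no directed edge between them in either direction. The order dimension of a poset $P$ is the least $d$ such that $P$ is isomorphic to a subposet of $\mathbb R^d$ with the componentwise order. *)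

theory Defs
  imports Complex_Main
begin

definition semidistributive :: "'a::lattice itself \<Rightarrow> bool" where
  "semidistributive _ \<longleftrightarrow>
     (\<forall>x y z::'a. sup x y = sup x z \<longrightarrow> sup x (inf y z) = sup x y) \<and>
     (\<forall>x y z::'a. inf x y = inf x z \<longrightarrow> inf x (sup y z) = inf x y)"

definition join_irr :: "'a::lattice \<Rightarrow> bool" where
  "join_irr x \<longleftrightarrow> (\<exists>y. y < x) \<and> (\<forall>a b. x = sup a b \<longrightarrow> x = a \<or> x = b)"

definition meet_irr :: "'a::lattice \<Rightarrow> bool" where
  "meet_irr x \<longleftrightarrow> (\<exists>y. x < y) \<and> (\<forall>a b. x = inf a b \<longrightarrow> x = a \<or> x = b)"

definition is_chain :: "'a::order set \<Rightarrow> bool" where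
  "is_chain C \<longleftrightarrow> (\<forall>x\<in>C. \<forall>y\<in>C. x \<le> y \<or> y \<le> x)"

definition lattice_length :: "'a::{finite,order} itself \<Rightarrow> nat" where
  "lattice_length _ = Max {card C | C::'a set. is_chain C} - 1"

definition extremal :: "'a::{finite,lattice} itself \<Rightarrow> bool" where
  "extremal T \<longleftrightarrow> lattice_length T = card {x::'a. join_irr x} \<and>
                   lattice_length T = card {x::'a. meet_irr x}"

(* Order dimension: least d such that P embeds into R^d with the componentwise order
   (vectors of R^d represented as functions nat => real, coordinates i < d). *)
definition order_dim :: "'a::order itself \<Rightarrow> nat" where
  "order_dim _ = (LEAST d. \<exists>f :: 'a \<Rightarrow> nat \<Rightarrow> real.
       \<forall>x y. x \<le> y \<longleftrightarrow> (\<forall>i<d. f x i \<le> f y i))"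

definition chromatic_number :: "'v set \<Rightarrow> ('v \<Rightarrow> 'v \<Rightarrow> bool) \<Rightarrow> nat" where
  "chromatic_number V E = (LEAST c. \<exists>col :: 'v \<Rightarrow> nat.
       (\<forall>v\<in>V. col v < c) \<and> (\<forall>u\<in>V. \<forall>v\<in>V. E u v \<longrightarrow> col u \<noteq> col v))"

(* The data coming from a chain x_0 < ... < x_n of length n, with numberings
   j_1..j_n of the join-irreducibles and m_1..m_n of the meet-irreducibles such that
   x_i = j_1 v ... v j_i = m_{i+1} ^ ... ^ m_n (iterated joins / meets). *)
definition galois_numbering ::
  "nat \<Rightarrow> (nat \<Rightarrow> 'a::{finite,bounded_lattice}) \<Rightarrow> (nat \<Rightarrow> 'a) \<Rightarrow> (nat \<Rightarrow> 'a) \<Rightarrow> bool" where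
  "galois_numbering n x j m \<longleftrightarrow>
     strict_mono_on {0..n} x \<and> x 0 = bot \<and> x n = top \<and>
     bij_betw j {1..n} {a. join_irr a} \<and> bij_betw m {1..n} {a. meet_irr a} \<and>
     (\<forall>i\<in>{1..n}. x i = sup (x (i - 1)) (j i)) \<and>
     (\<forall>i<n. x i = inf (m (i + 1)) (x (i + 1)))"

definition galois_edge ::
  "nat \<Rightarrow> (nat \<Rightarrow> 'a::{finite,bounded_lattice}) \<Rightarrow> (nat \<Rightarrow> 'a) \<Rightarrow> 'a \<Rightarrow> 'a \<Rightarrow> bool" where
  "galois_edge n j m u v \<longleftrightarrow>
     (\<exists>i\<in>{1..n}. \<exists>k\<in>{1..n}. j i = u \<and> j k = v \<and> i \<noteq> k \<and> \<not> (u \<le> m k))"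

definition galois_complement_edge ::
  "nat \<Rightarrow> (nat \<Rightarrow> 'a::{finite,bounded_lattice}) \<Rightarrow> (nat \<Rightarrow> 'a) \<Rightarrow> 'a \<Rightarrow> 'a \<Rightarrow> bool" where
  "galois_complement_edge n j m u v \<longleftrightarrow>
     u \<noteq> v \<and> \<not> galois_edge n j m u v \<and> \<not> galois_edge n j m v u"

end

theory Submission
  imports Defs
begin

(* Call (a, b) a critical pair if a is not below b, everything strictly below a is below b and
   everything strictly above b is above a. Every failure of z <= w is witnessed by a critical
   pair with a <= z and w <= b, and a (resp. b) is then join- (resp. meet-) irreducible. In a
   semidistributive lattice critical partners are unique, and together with the triangularity
   j_i <= m_k (i < k) of the numbering this makes the critical pairs exactly the (j_i, m_i).
   So z <= w fails iff j_i <= z and w <= m_i for some i, and an embedding into R^d amounts to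
   d coordinates jointly separating every pair (j_i, m_i). One coordinate can separate two
   pairs only if they do not cross (j_i <= m_k and j_k <= m_i), i.e. only if j_i, j_k are not
   adjacent in the complement of the Galois graph: color j_i by a coordinate separating its
   pair. Conversely, each color class gives a coordinate, the largest index of a
   join-irreducible of that color below the given element. *)

section \<open>Critical pairs\<close>

definition critical_pair :: "'a::order \<Rightarrow> 'a \<Rightarrow> bool" where
  "critical_pair a b \<longleftrightarrow> \<not> a \<le> b \<and> (\<forall>y. y < a \<longrightarrow> y \<le> b) \<and> (\<forall>y. b < y \<longrightarrow> a \<le> y)"

lemma critical_pair_join_irr:
  fixes a b :: "'a::lattice"
  assumes "critical_pair a b"
  shows "join_irr a"
  unfolding join_irr_def
proof (intro conjI allI impI)
  have "inf a b < a"
    using assms by (auto simp: critical_pair_def less_le_not_le)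
  then show "\<exists>y. y < a" ..
next
  fix p q
  assume a: "a = sup p q"
  show "a = p \<or> a = q"
  proof (rule ccontr)
    assume "\<not> (a = p \<or> a = q)"
    then have "p < a" "q < a"
      using a by (auto simp: order.strict_iff_order)
    then have "p \<le> b" "q \<le> b"
      using assms by (simp_all add: critical_pair_def)
    then show False
      using assms a by (simp add: critical_pair_def)
  qed
qed

lemma critical_pair_meet_irr:
  fixes a b :: "'a::lattice"
  assumes "critical_pair a b"
  shows "meet_irr b"
  unfolding meet_irr_def
proof (intro conjI allI impI)
  have "b < sup a b"
    using assms by (auto simp: critical_pair_def less_le_not_le)
  then show "\<exists>y. b < y" ..
next
  fix p q
  assume b: "b = inf p q"
  show "b = p \<or> b = q"
  proof (rule ccontr)
    assume "\<not> (b = p \<or> b = q)"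
    then have "b < p" "b < q"
      using b by (auto simp: order.strict_iff_order)
    then have "a \<le> p" "a \<le> q"
      using assms by (simp_all add: critical_pair_def)
    then show False
      using assms b by (simp add: critical_pair_def)
  qed
qed

lemma critical_pair_exists:
  fixes z w :: "'a::{finite,lattice}"
  assumes "\<not> z \<le> w"
  obtains a b where "a \<le> z" "w \<le> b" "critical_pair a b"
proof -
  obtain a where a: "a \<le> z" "\<not> a \<le> w"
    and a_min: "\<And>y. y \<le> z \<Longrightarrow> \<not> y \<le> w \<Longrightarrow> y \<le> a \<Longrightarrow> a = y"
    using finite_has_minimal[of "{a. a \<le> z \<and> \<not> a \<le> w}"] assms by auto
  obtain b where b: "w \<le> b" "\<not> a \<le> b"
    and b_max: "\<And>y. w \<le> y \<Longrightarrow> \<not> a \<le> y \<Longrightarrow> b \<le> y \<Longrightarrow> b = y"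
    using finite_has_maximal[of "{b. w \<le> b \<and> \<not> a \<le> b}"] a by auto
  have "critical_pair a b"
    unfolding critical_pair_def
  proof (intro conjI allI impI)
    fix y
    assume "y < a"
    then have "y \<le> w"
      using a a_min by (metis less_le order.trans)
    then show "y \<le> b" using b by simp
  next
    fix y
    assume "b < y"
    then show "a \<le> y"
      using b b_max by (metis less_le order.trans)
  qed (use b in simp)
  with \<open>a \<le> z\<close> \<open>w \<le> b\<close> show thesis by (rule that)
qed

lemma join_irr_lower_cover:
  fixes a :: "'a::{finite,lattice}"
  assumes "join_irr a"
  shows "\<exists>w<a. \<forall>y<a. y \<le> w"
proof -
  have "{y. y < a} \<noteq> {}"
    using assms by (auto simp: join_irr_def)
  then obtain w where w: "w < a" and w_max: "\<And>y. y < a \<Longrightarrow> w \<le> y \<Longrightarrow> w = y"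
    using finite_has_maximal[of "{y. y < a}"] by auto
  have "y \<le> w" if "y < a" for y
  proof -
    have "sup y w \<noteq> a"
      using assms that w by (metis join_irr_def less_irrefl)
    then have "sup y w < a"
      using that w by (simp add: order.strict_iff_order)
    then show ?thesis
      using w_max by (metis sup_ge1 sup_ge2)
  qed
  with \<open>w < a\<close> show ?thesis by blast
qed

lemma join_irr_critical_pair:
  fixes a :: "'a::{finite,lattice}"
  assumes "join_irr a"
  obtains b where "critical_pair a b"
proof -
  obtain w where "w < a" and w_max: "\<forall>y<a. y \<le> w"
    using join_irr_lower_cover[OF assms] by blast
  then have "\<not> a \<le> w"
    by (simp add: not_le)
  then obtain a' b where a': "a' \<le> a" "w \<le> b" and a'b: "critical_pair a' b"
    by (rule critical_pair_exists)
  have "a' = a"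
  proof (rule ccontr)
    assume "a' \<noteq> a"
    with a' w_max have "a' \<le> w"
      by simp
    with a' have "a' \<le> b"
      by simp
    with a'b show False
      by (simp add: critical_pair_def)
  qed
  with a'b show thesis
    by (intro that) simp
qed

text \<open>Two partners \<open>b, b'\<close> of \<open>a\<close> have the same meet with \<open>a\<close>, so by
  semidistributivity so does \<open>sup b b'\<close>, which therefore lies neither above \<open>a\<close> nor
  strictly above \<open>b\<close> or \<open>b'\<close>.\<close>

lemma critical_pair_unique_right:
  fixes a b b' :: "'a::lattice"
  assumes sd: "semidistributive TYPE('a)"
    and ab: "critical_pair a b" and ab': "critical_pair a b'"
  shows "b = b'"
proof -
  have inf_less: "inf a c < a" if "critical_pair a c" for c
    using that by (auto simp: critical_pair_def less_le_not_le)
  have "inf a b = inf a b'"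
    using inf_less[OF ab] inf_less[OF ab'] ab ab'
    by (auto simp: critical_pair_def intro: antisym)
  then have "inf a (sup b b') = inf a b"
    using sd by (simp add: semidistributive_def)
  then have "\<not> a \<le> sup b b'"
    using inf_less[OF ab] by (metis inf.absorb1 less_irrefl)
  then have "sup b b' = b" "sup b b' = b'"
    using ab ab' by (auto simp: critical_pair_def order.strict_iff_order)
  then show ?thesis by simp
qed

lemma critical_pair_unique_left:
  fixes a a' b :: "'a::lattice"
  assumes sd: "semidistributive TYPE('a)"
    and ab: "critical_pair a b" and a'b: "critical_pair a' b"
  shows "a = a'"
proof -
  have sup_greater: "b < sup b c" if "critical_pair c b" for c
    using that by (auto simp: critical_pair_def less_le_not_le)
  have "sup b a = sup b a'"
    using sup_greater[OF ab] sup_greater[OF a'b] ab a'b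
    by (auto simp: critical_pair_def intro: antisym)
  then have "sup b (inf a a') = sup b a"
    using sd by (simp add: semidistributive_def)
  then have "\<not> inf a a' \<le> b"
    using sup_greater[OF ab] by (metis sup.absorb1 less_irrefl)
  then have "inf a a' = a" "inf a a' = a'"
    using ab a'b by (auto simp: critical_pair_def order.strict_iff_order)
  then show ?thesis by simp
qed

section \<open>Galois numberings\<close>

lemma galois_numbering_strict_mono:
  "galois_numbering n x j m \<Longrightarrow> strict_mono_on {0..n} x"
  by (simp add: galois_numbering_def)

lemma galois_numbering_bij_join_irr:
  "galois_numbering n x j m \<Longrightarrow> bij_betw j {1..n} {a. join_irr a}"
  by (simp add: galois_numbering_def)

lemma galois_numbering_bij_meet_irr:
  "galois_numbering n x j m \<Longrightarrow> bij_betw m {1..n} {a. meet_irr a}"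
  by (simp add: galois_numbering_def)

lemma galois_numbering_eq_sup_join_irr:
  assumes "galois_numbering n x j m" "i \<in> {1..n}"
  shows "x i = sup (x (i - 1)) (j i)"
  using assms unfolding galois_numbering_def by blast

lemma galois_numbering_eq_inf_meet_irr:
  assumes "galois_numbering n x j m" "k \<in> {1..n}"
  shows "x (k - 1) = inf (m k) (x k)"
proof -
  have "\<forall>i<n. x i = inf (m (i + 1)) (x (i + 1))"
    using assms(1) unfolding galois_numbering_def by blast
  moreover have "k - 1 < n" "k - 1 + 1 = k"
    using assms(2) by auto
  ultimately show ?thesis
    by metis
qed

lemma galois_numbering_join_irr_le_meet_irr:
  assumes g: "galois_numbering n x j m"
    and "i \<in> {1..n}" "k \<in> {1..n}" "i < k"
  shows "j i \<le> m k"
proof -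
  have "j i \<le> x i"
    using galois_numbering_eq_sup_join_irr[OF g assms(2)] by (metis sup_ge2)
  also have "x i \<le> x (k - 1)"
    using strict_mono_on_less_eq[OF galois_numbering_strict_mono[OF g]] assms by simp
  also have "x (k - 1) \<le> m k"
    using galois_numbering_eq_inf_meet_irr[OF g assms(3)] by (metis inf_le1)
  finally show ?thesis .
qed

lemma galois_numbering_join_irr_not_le_meet_irr:
  assumes g: "galois_numbering n x j m" and i: "i \<in> {1..n}"
  shows "\<not> j i \<le> m i"
proof
  assume "j i \<le> m i"
  moreover have "x (i - 1) \<le> m i"
    using galois_numbering_eq_inf_meet_irr[OF g i] by (metis inf_le1)
  ultimately have "x i \<le> m i"
    using galois_numbering_eq_sup_join_irr[OF g i] by simp
  then have "x (i - 1) = x i"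
    using galois_numbering_eq_inf_meet_irr[OF g i] by (simp add: inf_absorb2)
  moreover have "x (i - 1) < x i"
    using i by (intro strict_mono_onD[OF galois_numbering_strict_mono[OF g]]) auto
  ultimately show False
    by simp
qed

lemma galois_numbering_critical_pair:
  fixes x j m :: "nat \<Rightarrow> 'a::{finite,bounded_lattice}"
  assumes sd: "semidistributive TYPE('a)" and g: "galois_numbering n x j m"
  shows "i \<in> {1..n} \<Longrightarrow> critical_pair (j i) (m i)"
proof (induction i rule: less_induct)
  case (less i)
  have j: "bij_betw j {1..n} {a. join_irr a}" and m: "bij_betw m {1..n} {a. meet_irr a}"
    using galois_numbering_bij_join_irr[OF g] galois_numbering_bij_meet_irr[OF g] .
  then have "join_irr (j i)"
    using less.prems by (auto simp: bij_betw_def)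
  then obtain b where b: "critical_pair (j i) b"
    by (rule join_irr_critical_pair)
  then have "meet_irr b"
    by (rule critical_pair_meet_irr)
  then have "b \<in> m ` {1..n}"
    using m by (simp add: bij_betw_def)
  then obtain k where k: "k \<in> {1..n}" "b = m k"
    by blast
  have "\<not> i < k"
    using b k galois_numbering_join_irr_le_meet_irr[OF g less.prems k(1)]
    by (auto simp: critical_pair_def)
  moreover have "\<not> k < i"
  proof
    assume "k < i"
    then have "critical_pair (j k) (m k)"
      using less.IH k(1) by blast
    then have "j k = j i"
      using critical_pair_unique_left[OF sd] b k(2) by blast
    then show False
      using \<open>k < i\<close> k(1) less.prems bij_betw_imp_inj_on[OF j] by (simp add: inj_on_eq_iff)
  qed
  ultimately show ?case
    using b k by simp
qed

lemma galois_numbering_separation: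
  fixes x j m :: "nat \<Rightarrow> 'a::{finite,bounded_lattice}"
  assumes sd: "semidistributive TYPE('a)" and g: "galois_numbering n x j m"
    and "\<not> z \<le> w"
  shows "\<exists>i\<in>{1..n}. j i \<le> z \<and> w \<le> m i"
proof -
  obtain a b where ab: "a \<le> z" "w \<le> b" "critical_pair a b"
    using assms(3) by (rule critical_pair_exists)
  from ab(3) have "join_irr a"
    by (rule critical_pair_join_irr)
  then have "a \<in> j ` {1..n}"
    using galois_numbering_bij_join_irr[OF g] by (simp add: bij_betw_def)
  then obtain i where i: "i \<in> {1..n}" "a = j i"
    by blast
  then have "b = m i"
    using critical_pair_unique_right[OF sd] ab(3) galois_numbering_critical_pair[OF sd g] by blast
  then show ?thesis
    using ab i by blast
qed

lemma galois_complement_edge_iff: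
  assumes g: "galois_numbering n x j m" and i: "i \<in> {1..n}" and k: "k \<in> {1..n}"
  shows "galois_complement_edge n j m (j i) (j k) \<longleftrightarrow> j i \<le> m k \<and> j k \<le> m i"
proof -
  have "inj_on j {1..n}"
    using galois_numbering_bij_join_irr[OF g] by (rule bij_betw_imp_inj_on)
  then have "galois_edge n j m (j p) (j q) \<longleftrightarrow> p \<noteq> q \<and> \<not> j p \<le> m q"
    if "p \<in> {1..n}" "q \<in> {1..n}" for p q
    using that unfolding galois_edge_def by (auto simp: inj_on_eq_iff)
  then show ?thesis
    using i k \<open>inj_on j {1..n}\<close> galois_numbering_join_irr_not_le_meet_irr[OF g]
    unfolding galois_complement_edge_def by (auto simp: inj_on_eq_iff)
qed

section \<open>Coordinate embeddings and colorings\<close>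

definition coordinate_embedding :: "('a::order \<Rightarrow> nat \<Rightarrow> real) \<Rightarrow> nat \<Rightarrow> bool" where
  "coordinate_embedding f d \<longleftrightarrow> (\<forall>x y. x \<le> y \<longleftrightarrow> (\<forall>t<d. f x t \<le> f y t))"

definition proper_coloring :: "'v set \<Rightarrow> ('v \<Rightarrow> 'v \<Rightarrow> bool) \<Rightarrow> ('v \<Rightarrow> nat) \<Rightarrow> nat \<Rightarrow> bool" where
  "proper_coloring V E col c \<longleftrightarrow>
     (\<forall>v\<in>V. col v < c) \<and> (\<forall>u\<in>V. \<forall>v\<in>V. E u v \<longrightarrow> col u \<noteq> col v)"

lemma order_dim_eq_Least_coordinate_embedding:
  "order_dim TYPE('a::order) = (LEAST d. \<exists>f :: 'a \<Rightarrow> nat \<Rightarrow> real. coordinate_embedding f d)"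
  by (simp add: order_dim_def coordinate_embedding_def)

lemma chromatic_number_eq_Least_proper_coloring:
  "chromatic_number V E = (LEAST c. \<exists>col. proper_coloring V E col c)"
  by (simp add: chromatic_number_def proper_coloring_def)

lemma ex_proper_coloring_bij_betw_iff:
  assumes h: "bij_betw h A B" and E: "\<And>a a'. a \<in> A \<Longrightarrow> a' \<in> A \<Longrightarrow> E (h a) (h a') \<longleftrightarrow> F a a'"
  shows "(\<exists>col. proper_coloring B E col c) \<longleftrightarrow> (\<exists>col. proper_coloring A F col c)"
proof
  assume "\<exists>col. proper_coloring B E col c"
  then obtain col where "proper_coloring B E col c" ..
  then have "proper_coloring A F (col \<circ> h) c"
    using h E by (auto simp: proper_coloring_def bij_betw_def)
  then show "\<exists>col. proper_coloring A F col c"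
    by blast
next
  assume "\<exists>col. proper_coloring A F col c"
  then obtain col where col: "proper_coloring A F col c" ..
  have "inv_into A h v \<in> A" "h (inv_into A h v) = v" if "v \<in> B" for v
    using h that by (auto simp: bij_betw_def inv_into_into f_inv_into_f)
  then have "proper_coloring B E (col \<circ> inv_into A h) c"
    using col E by (simp add: proper_coloring_def) metis
  then show "\<exists>col. proper_coloring B E col c"
    by blast
qed

lemma proper_coloring_of_coordinate_embedding:
  fixes j m :: "'i \<Rightarrow> 'a::order"
  assumes f: "coordinate_embedding f d" and diag: "\<And>i. i \<in> I \<Longrightarrow> \<not> j i \<le> m i"
  shows "proper_coloring I (\<lambda>i k. j i \<le> m k \<and> j k \<le> m i) (\<lambda>i. LEAST t. f (m i) t < f (j i) t) d"
proof -
  define col where "col i = (LEAST t. f (m i) t < f (j i) t)" for i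
  have col: "col i < d \<and> f (m i) (col i) < f (j i) (col i)" if i: "i \<in> I" for i
  proof -
    obtain t where t: "t < d" "f (m i) t < f (j i) t"
      using diag[OF i] f by (auto simp: coordinate_embedding_def not_le)
    then show ?thesis
      unfolding col_def by (meson LeastI Least_le le_less_trans)
  qed
  have "col i \<noteq> col k" if "i \<in> I" "k \<in> I" "j i \<le> m k" "j k \<le> m i" for i k
  proof
    assume same: "col i = col k"
    have "f (j i) (col i) \<le> f (m k) (col i)" "f (j k) (col i) \<le> f (m i) (col i)"
      using f that col by (auto simp: coordinate_embedding_def)
    moreover have "f (m k) (col i) < f (j k) (col i)"
      using col[OF \<open>k \<in> I\<close>] same by simp
    ultimately show False
      using col[OF \<open>i \<in> I\<close>] by linarith
  qed
  then show ?thesis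
    using col by (auto simp: proper_coloring_def col_def)
qed

lemma coordinate_embedding_of_proper_coloring:
  fixes j m :: "nat \<Rightarrow> 'a::order"
  assumes separation: "\<And>z w. \<not> z \<le> w \<Longrightarrow> \<exists>i\<in>{1..n}. j i \<le> z \<and> w \<le> m i"
    and upper: "\<And>i k. i \<in> {1..n} \<Longrightarrow> k \<in> {1..n} \<Longrightarrow> i < k \<Longrightarrow> j i \<le> m k"
    and diag: "\<And>i. i \<in> {1..n} \<Longrightarrow> \<not> j i \<le> m i"
    and col: "proper_coloring {1..n} (\<lambda>i k. j i \<le> m k \<and> j k \<le> m i) col c"
  shows "coordinate_embedding (\<lambda>z t. real (Max (insert 0 {k \<in> {1..n}. col k = t \<and> j k \<le> z}))) c"
proof -
  define S where "S z t = insert 0 {k \<in> {1..n}. col k = t \<and> j k \<le> z}" for z t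
  have fin: "finite (S z t)" for z t
    by (simp add: S_def)
  have mono: "Max (S u t) \<le> Max (S v t)" if "u \<le> v" for u v t
    using that fin by (intro Max_mono) (auto simp: S_def intro: order.trans)
  \<comment> \<open>Within a color class, \<open>i < k\<close> forces \<open>\<not> j k \<le> m i\<close>; so only indices below \<open>i\<close>
    of the color of \<open>i\<close> lie under \<open>m i\<close>, while \<open>i\<close> itself lies under \<open>j i\<close>.\<close>
  have strict: "Max (S (m i) (col i)) < Max (S (j i) (col i))" if i: "i \<in> {1..n}" for i
  proof -
    have "k < i" if "k \<in> S (m i) (col i)" for k
    proof (cases "k = 0")
      case False
      then have k: "k \<in> {1..n}" "col k = col i" "j k \<le> m i"
        using that by (auto simp: S_def)
      then have "\<not> (j i \<le> m k \<and> j k \<le> m i)"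
        using col i unfolding proper_coloring_def by auto
      then have "\<not> i < k"
        using upper[OF i k(1)] k(3) by blast
      moreover have "k \<noteq> i"
        using diag k by blast
      ultimately show ?thesis by simp
    qed (use i in simp)
    then have "Max (S (m i) (col i)) < i"
      using fin by (simp add: S_def)
    moreover have "i \<in> S (j i) (col i)"
      using i by (simp add: S_def)
    then have "i \<le> Max (S (j i) (col i))"
      by (rule Max_ge[OF fin])
    ultimately show ?thesis
      by simp
  qed
  have "u \<le> v \<longleftrightarrow> (\<forall>t<c. Max (S u t) \<le> Max (S v t))" for u v
  proof
    assume "\<forall>t<c. Max (S u t) \<le> Max (S v t)"
    show "u \<le> v"
    proof (rule ccontr)
      assume "\<not> u \<le> v"
      then obtain i where i: "i \<in> {1..n}" "j i \<le> u" "v \<le> m i"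
        using separation by blast
      have "Max (S v (col i)) \<le> Max (S (m i) (col i))"
        using mono[OF i(3)] .
      also have "\<dots> < Max (S (j i) (col i))"
        using strict[OF i(1)] .
      also have "\<dots> \<le> Max (S u (col i))"
        using mono[OF i(2)] .
      finally have "Max (S v (col i)) < Max (S u (col i))" .
      moreover have "col i < c"
        using col i(1) by (simp add: proper_coloring_def)
      then have "Max (S u (col i)) \<le> Max (S v (col i))"
        using \<open>\<forall>t<c. Max (S u t) \<le> Max (S v t)\<close> by blast
      ultimately show False
        by simp
    qed
  qed (use mono in blast)
  then show ?thesis
    unfolding coordinate_embedding_def S_def[symmetric] of_nat_le_iff by blast
qed

lemma galois_numbering_ex_coordinate_embedding_iff:
  fixes x j m :: "nat \<Rightarrow> 'a::{finite,bounded_lattice}"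
  assumes sd: "semidistributive TYPE('a)" and g: "galois_numbering n x j m"
  shows "(\<exists>f :: 'a \<Rightarrow> nat \<Rightarrow> real. coordinate_embedding f d) \<longleftrightarrow>
         (\<exists>col. proper_coloring {1..n} (\<lambda>i k. j i \<le> m k \<and> j k \<le> m i) col d)"
proof
  assume "\<exists>f :: 'a \<Rightarrow> nat \<Rightarrow> real. coordinate_embedding f d"
  then obtain f :: "'a \<Rightarrow> nat \<Rightarrow> real" where f: "coordinate_embedding f d" ..
  show "\<exists>col. proper_coloring {1..n} (\<lambda>i k. j i \<le> m k \<and> j k \<le> m i) col d"
    by (rule exI, rule proper_coloring_of_coordinate_embedding[OF f
          galois_numbering_join_irr_not_le_meet_irr[OF g]])
next
  assume "\<exists>col. proper_coloring {1..n} (\<lambda>i k. j i \<le> m k \<and> j k \<le> m i) col d"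
  then obtain col where col: "proper_coloring {1..n} (\<lambda>i k. j i \<le> m k \<and> j k \<le> m i) col d" ..
  show "\<exists>f :: 'a \<Rightarrow> nat \<Rightarrow> real. coordinate_embedding f d"
    by (rule exI, rule coordinate_embedding_of_proper_coloring[OF
          galois_numbering_separation[OF sd g] galois_numbering_join_irr_le_meet_irr[OF g]
          galois_numbering_join_irr_not_le_meet_irr[OF g] col])
qed

theorem theorem3p51:
  fixes x j m :: "nat \<Rightarrow> 'a::{finite,bounded_lattice}"
  assumes "semidistributive TYPE('a)"
    and "extremal TYPE('a)"
    and "card (UNIV :: 'a set) > 1"
    and "n = lattice_length TYPE('a)"
    and "galois_numbering n x j m"
  shows "order_dim TYPE('a) =
         chromatic_number {a::'a. join_irr a} (galois_complement_edge n j m)"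
proof -
  note g = assms(5)
  have "(\<exists>col. proper_coloring {a. join_irr a} (galois_complement_edge n j m) col d) \<longleftrightarrow>
        (\<exists>col. proper_coloring {1..n} (\<lambda>i k. j i \<le> m k \<and> j k \<le> m i) col d)" for d
    using galois_numbering_bij_join_irr[OF g] galois_complement_edge_iff[OF g]
    by (rule ex_proper_coloring_bij_betw_iff)
  with galois_numbering_ex_coordinate_embedding_iff[OF assms(1) g] show ?thesis
    by (simp add: order_dim_eq_Least_coordinate_embedding chromatic_number_eq_Least_proper_coloring)
qed

end
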